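(* Let $\mathbf P$ be a cyclic CFSM protocol with the rational channel property and communication graph $(N,E)$, and let $\beta\in E$. A composite state $S'$ is not stable if and only if there is a family of regular sets $Q(S)\subseteq M_\beta^*$, $S\in\prod_{j\in N}K_j$, consistent with respect to $\mathbf P$ and $\beta$, such that $\lambda\in Q(S^0)$ and $\lambda\notin Q(S')$.
   Context: A CFSM protocol $\mathbf P$ has a finite directed communication graph $G=(N,E)$ (edge $\xi$ has tail $-\xi$, head $+\xi$), pairwise disjoint finite message sets $M_\xi$, and for each $j\in N$ a finite state machine $F_j=(K_j,\Sigma_j,T_j,h_j)$: finite state set $K_j$, initial state $h_j$, alphabet $\Sigma_j=\{+b: b\in M_\xi,\ j=+\xi\}\cup\{-b: b\in M_\xi,\ j=-\xi\}$, transitions $T_j\subseteq K_j\times\Sigma_j\times K_j$ ($+b$ = receive, $-b$ = send). A composite state is $S=(p_j:j\in N)$; a channel content is $C=(x_\xi:\xi\in E)$, $x_\xi\in M_\xi^*$; global states are pairs $(S,C)$; $C^0$ has all components equal to the empty word $\lambda$; $S^0=(h_j:j\in N)$ and $(S^0,C^0)$ is the initial global state. A step: some machine $F_i$ takes $p_i\xrightarrow{-b}q_i$ with $b\in M_\beta$, $i=-\beta$, appending $b$ to the end of $x_\beta$; or takes $p_i\xrightarrow{+b}q_i$ with $b\in M_\beta$, $i=+\beta$, provided $x_\beta$ begins with $b$, removing it; all else unchanged. $\vdash^*$ means reachability by finitely many steps. A composite state $S$ is stable if $(S^0,C^0)\vdash^*(S,C^0)$. $\mathbf L(S)=\{C:(S^0,C^0)\vdash^*(S,C)\}$.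 A subset of $\prod_{\xi\in E}M_\xi^*$ is rational if it belongs to the smallest family containing finite sets and closed under union, componentwise product and Kleene star; $\mathbf P$ has the rational channel property if every $\mathbf L(S)$ is rational. $\mathbf P$ is cyclic if $G$ is a directed cycle. A family $Q(S)\subseteq M_\beta^*$ is consistent with respect to $\mathbf P$ and $\beta$ if whenever $(S,(x_\xi))\vdash^*(S',(x'_\xi))$ with $x_\xi=x'_\xi=\lambda$ for $\xi\neq\beta$ and $x_\beta\in Q(S)$, then $x'_\beta\in Q(S')$. *)

theory Defs
  imports Main
begin

(* Actions of a machine: Snd b is the label -b (send), Rcv b is the label +b (receive). *)
datatype 'm act = Snd 'm | Rcv 'm

(* Nodes N = UNIV :: 'n set, edges E = UNIV :: 'e set (both finite types).
   src e = -e (tail), dst e = +e (head); M e = message set of edge e;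
   K j = state set, h j = initial state, T j = transition relation of machine F_j. *)

definition alphabet ::
  "('e \<Rightarrow> 'n) \<Rightarrow> ('e \<Rightarrow> 'n) \<Rightarrow> ('e \<Rightarrow> 'm set) \<Rightarrow> 'n \<Rightarrow> 'm act set" where
  "alphabet src dst M j =
     {Rcv b | b \<xi>. b \<in> M \<xi> \<and> j = dst \<xi>} \<union> {Snd b | b \<xi>. b \<in> M \<xi> \<and> j = src \<xi>}"

definition cfsm_protocol ::
  "('e::finite \<Rightarrow> 'n::finite) \<Rightarrow> ('e \<Rightarrow> 'n) \<Rightarrow> ('e \<Rightarrow> 'm set) \<Rightarrow>
   ('n \<Rightarrow> 's set) \<Rightarrow> ('n \<Rightarrow> 's) \<Rightarrow> ('n \<Rightarrow> ('s \<times> 'm act \<times> 's) set) \<Rightarrow> bool" where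
  "cfsm_protocol src dst M K h T \<longleftrightarrow>
     (\<forall>\<xi>. finite (M \<xi>)) \<and>
     (\<forall>\<xi> \<eta>. \<xi> \<noteq> \<eta> \<longrightarrow> M \<xi> \<inter> M \<eta> = {}) \<and>
     (\<forall>j. finite (K j) \<and> h j \<in> K j \<and> T j \<subseteq> K j \<times> alphabet src dst M j \<times> K j)"

definition composite_states :: "('n \<Rightarrow> 's set) \<Rightarrow> ('n \<Rightarrow> 's) set" where
  "composite_states K = {S. \<forall>j. S j \<in> K j}"

inductive cfsm_step ::
  "('e \<Rightarrow> 'n) \<Rightarrow> ('e \<Rightarrow> 'n) \<Rightarrow> ('e \<Rightarrow> 'm set) \<Rightarrow> ('n \<Rightarrow> ('s \<times> 'm act \<times> 's) set) \<Rightarrow>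
   ('n \<Rightarrow> 's) \<times> ('e \<Rightarrow> 'm list) \<Rightarrow> ('n \<Rightarrow> 's) \<times> ('e \<Rightarrow> 'm list) \<Rightarrow> bool"
  for src dst M T where
  send: "\<lbrakk> b \<in> M \<beta>; i = src \<beta>; (S i, Snd b, q) \<in> T i \<rbrakk>
         \<Longrightarrow> cfsm_step src dst M T (S, C) (S(i := q), C(\<beta> := C \<beta> @ [b]))"
| recv: "\<lbrakk> b \<in> M \<beta>; i = dst \<beta>; (S i, Rcv b, q) \<in> T i; C \<beta> = b # w \<rbrakk>
         \<Longrightarrow> cfsm_step src dst M T (S, C) (S(i := q), C(\<beta> := w))"

abbreviation cfsm_reach where
  "cfsm_reach src dst M T \<equiv> (cfsm_step src dst M T)\<^sup>*\<^sup>*"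

definition empty_channels :: "'e \<Rightarrow> 'm list" where
  "empty_channels = (\<lambda>_. [])"

definition stable where
  "stable src dst M T h S \<longleftrightarrow> cfsm_reach src dst M T (h, empty_channels) (S, empty_channels)"

definition chan_lang where
  "chan_lang src dst M T h S = {C. cfsm_reach src dst M T (h, empty_channels) (S, C)}"

definition chan_space :: "('e \<Rightarrow> 'm set) \<Rightarrow> ('e \<Rightarrow> 'm list) set" where
  "chan_space M = {C. \<forall>\<xi>. set (C \<xi>) \<subseteq> M \<xi>}"

definition comp_prod :: "('e \<Rightarrow> 'm list) set \<Rightarrow> ('e \<Rightarrow> 'm list) set \<Rightarrow> ('e \<Rightarrow> 'm list) set" where
  "comp_prod A B = {(\<lambda>\<xi>. x \<xi> @ y \<xi>) | x y. x \<in> A \<and> y \<in> B}"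

inductive_set comp_star :: "('e \<Rightarrow> 'm list) set \<Rightarrow> ('e \<Rightarrow> 'm list) set" for A where
  unit: "(\<lambda>_. []) \<in> comp_star A"
| app: "x \<in> A \<Longrightarrow> y \<in> comp_star A \<Longrightarrow> (\<lambda>\<xi>. x \<xi> @ y \<xi>) \<in> comp_star A"

inductive rational_rel :: "('e \<Rightarrow> 'm set) \<Rightarrow> ('e \<Rightarrow> 'm list) set \<Rightarrow> bool" for M where
  fin: "finite A \<Longrightarrow> A \<subseteq> chan_space M \<Longrightarrow> rational_rel M A"
| union: "rational_rel M A \<Longrightarrow> rational_rel M B \<Longrightarrow> rational_rel M (A \<union> B)"
| prod: "rational_rel M A \<Longrightarrow> rational_rel M B \<Longrightarrow> rational_rel M (comp_prod A B)"
| star: "rational_rel M A \<Longrightarrow> rational_rel M (comp_star A)"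

definition rational_channel_property where
  "rational_channel_property src dst M K T h \<longleftrightarrow>
     (\<forall>S \<in> composite_states K. rational_rel M (chan_lang src dst M T h S))"

definition cyclic_graph :: "('e \<Rightarrow> 'n::finite) \<Rightarrow> ('e \<Rightarrow> 'n) \<Rightarrow> bool" where
  "cyclic_graph src dst \<longleftrightarrow>
     bij src \<and>
     (\<exists>f :: nat \<Rightarrow> 'n. bij_betw f {..<card (UNIV :: 'n set)} UNIV \<and>
        (\<forall>e i. i < card (UNIV :: 'n set) \<and> src e = f i \<longrightarrow> dst e = f (Suc i mod card (UNIV :: 'n set))))"

definition lang_conc :: "'a list set \<Rightarrow> 'a list set \<Rightarrow> 'a list set" where
  "lang_conc A B = {x @ y | x y. x \<in> A \<and> y \<in> B}"

inductive_set lang_star :: "'a list set \<Rightarrow> 'a list set" for A where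
  nil: "[] \<in> lang_star A"
| app: "x \<in> A \<Longrightarrow> y \<in> lang_star A \<Longrightarrow> x @ y \<in> lang_star A"

inductive regular_lang :: "'a list set \<Rightarrow> bool" where
  fin: "finite A \<Longrightarrow> regular_lang A"
| union: "regular_lang A \<Longrightarrow> regular_lang B \<Longrightarrow> regular_lang (A \<union> B)"
| conc: "regular_lang A \<Longrightarrow> regular_lang B \<Longrightarrow> regular_lang (lang_conc A B)"
| star: "regular_lang A \<Longrightarrow> regular_lang (lang_star A)"

definition consistent_family where
  "consistent_family src dst M K T \<beta> Q \<longleftrightarrow>
     (\<forall>S \<in> composite_states K. \<forall>S' \<in> composite_states K. \<forall>C C'.
        cfsm_reach src dst M T (S, C) (S', C') \<longrightarrow>
        (\<forall>\<xi>. \<xi> \<noteq> \<beta> \<longrightarrow> C \<xi> = [] \<and> C' \<xi> = []) \<longrightarrow>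
        C \<beta> \<in> Q S \<longrightarrow> C' \<beta> \<in> Q S')"

end

theory Submission
  imports Defs
begin

text \<open>Take Q(S) to be the set of words w such that L(S) contains the channel content
carrying w on \<beta> and nothing elsewhere. Such a family is consistent because reachability
composes, it contains \<lambda> at S exactly when S is stable, and it is regular because this
single-channel section of a rational relation is regular: if a componentwise product or
star of channel contents is empty off \<beta>, so are its factors. Conversely a consistent
family containing \<lambda> at the initial state contains \<lambda> at every stable state.\<close>

definition single_channel :: "'e \<Rightarrow> ('e \<Rightarrow> 'm list) set \<Rightarrow> 'm list set" where
  "single_channel \<beta> A = {C \<beta> | C. C \<in> A \<and> (\<forall>\<xi>. \<xi> \<noteq> \<beta> \<longrightarrow> C \<xi> = [])}"

lemma in_single_channel_iff:
  "w \<in> single_channel \<beta> A \<longleftrightarrow> (\<exists>C \<in> A. (\<forall>\<xi>. \<xi> \<noteq> \<beta> \<longrightarrow> C \<xi> = []) \<and> C \<beta> = w)"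
  unfolding single_channel_def by blast

lemma single_channel_union:
  "single_channel \<beta> (A \<union> B) = single_channel \<beta> A \<union> single_channel \<beta> B"
  unfolding single_channel_def by auto

lemma single_channel_comp_prod:
  "single_channel \<beta> (comp_prod A B) = lang_conc (single_channel \<beta> A) (single_channel \<beta> B)"
proof (intro equalityI subsetI)
  fix w assume "w \<in> single_channel \<beta> (comp_prod A B)"
  then obtain x y where "x \<in> A" "y \<in> B" "\<forall>\<xi>. \<xi> \<noteq> \<beta> \<longrightarrow> x \<xi> @ y \<xi> = []"
    and "w = x \<beta> @ y \<beta>"
    unfolding in_single_channel_iff comp_prod_def by blast
  then show "w \<in> lang_conc (single_channel \<beta> A) (single_channel \<beta> B)"
    unfolding lang_conc_def in_single_channel_iff by auto
next
  fix w assume "w \<in> lang_conc (single_channel \<beta> A) (single_channel \<beta> B)"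
  then obtain x y where "x \<in> A" "y \<in> B" "\<forall>\<xi>. \<xi> \<noteq> \<beta> \<longrightarrow> x \<xi> = [] \<and> y \<xi> = []"
    and "w = x \<beta> @ y \<beta>"
    unfolding lang_conc_def in_single_channel_iff by blast
  then show "w \<in> single_channel \<beta> (comp_prod A B)"
    unfolding in_single_channel_iff comp_prod_def by auto
qed

lemma single_channel_comp_star:
  "single_channel \<beta> (comp_star A) = lang_star (single_channel \<beta> A)"
proof (intro equalityI subsetI)
  have "C \<beta> \<in> lang_star (single_channel \<beta> A)"
    if "C \<in> comp_star A" "\<forall>\<xi>. \<xi> \<noteq> \<beta> \<longrightarrow> C \<xi> = []" for C
    using that
  proof (induction rule: comp_star.induct)
    case unit
    show ?case by (simp add: lang_star.nil)
  next
    case (app x y)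
    then have "x \<beta> \<in> single_channel \<beta> A"
      unfolding in_single_channel_iff by auto
    with app show ?case by (simp add: lang_star.app)
  qed
  then show "w \<in> lang_star (single_channel \<beta> A)" if "w \<in> single_channel \<beta> (comp_star A)" for w
    using that unfolding in_single_channel_iff by blast
next
  fix w assume "w \<in> lang_star (single_channel \<beta> A)"
  then show "w \<in> single_channel \<beta> (comp_star A)"
  proof (induction rule: lang_star.induct)
    case nil
    show ?case unfolding in_single_channel_iff by (auto intro: comp_star.unit)
  next
    case (app u v)
    then obtain x y where "x \<in> A" "y \<in> comp_star A" "\<forall>\<xi>. \<xi> \<noteq> \<beta> \<longrightarrow> x \<xi> = [] \<and> y \<xi> = []"
      and "u = x \<beta>" "v = y \<beta>"
      unfolding in_single_channel_iff by blast
    then show ?case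
      unfolding in_single_channel_iff
      by (intro bexI[of _ "\<lambda>\<xi>. x \<xi> @ y \<xi>"] comp_star.app) auto
  qed
qed

lemma regular_single_channel:
  "rational_rel M A \<Longrightarrow> regular_lang (single_channel \<beta> A)"
proof (induction rule: rational_rel.induct)
  case (fin A)
  then show ?case
    unfolding single_channel_def by (simp add: regular_lang.fin)
qed (simp_all add: single_channel_union single_channel_comp_prod single_channel_comp_star
                   regular_lang.union regular_lang.conc regular_lang.star)

lemma comp_star_subset_chan_space:
  assumes "A \<subseteq> chan_space M"
  shows "comp_star A \<subseteq> chan_space M"
proof
  fix C assume "C \<in> comp_star A"
  then show "C \<in> chan_space M"
  proof induction
    case (app x y)
    with assms have "x \<in> chan_space M" by blast
    with app.IH show ?case unfolding chan_space_def by simp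
  qed (simp add: chan_space_def)
qed

lemma rational_rel_subset_chan_space:
  "rational_rel M A \<Longrightarrow> A \<subseteq> chan_space M"
proof (induction rule: rational_rel.induct)
  case (prod A B)
  then show ?case
    unfolding comp_prod_def chan_space_def by fastforce
qed (auto simp: comp_star_subset_chan_space)

lemma single_channel_subset_lists:
  assumes "A \<subseteq> chan_space M"
  shows "single_channel \<beta> A \<subseteq> lists (M \<beta>)"
proof
  fix w assume "w \<in> single_channel \<beta> A"
  then obtain C where "C \<in> A" "C \<beta> = w"
    unfolding in_single_channel_iff by blast
  with assms show "w \<in> lists (M \<beta>)"
    unfolding chan_space_def by auto
qed

lemma single_channel_Nil_iff:
  fixes A :: "('e \<Rightarrow> 'm list) set"
  shows "[] \<in> single_channel \<beta> A \<longleftrightarrow> empty_channels \<in> A"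
proof -
  have "(\<forall>\<xi>. \<xi> \<noteq> \<beta> \<longrightarrow> C \<xi> = []) \<and> C \<beta> = [] \<longleftrightarrow> C = empty_channels"
    for C :: "'e \<Rightarrow> 'm list"
    by (auto simp: empty_channels_def fun_eq_iff)
  then show ?thesis
    unfolding in_single_channel_iff by simp
qed

lemma Nil_in_single_channel_chan_lang_iff_stable:
  "[] \<in> single_channel \<beta> (chan_lang src dst M T h S) \<longleftrightarrow> stable src dst M T h S"
  by (simp add: single_channel_Nil_iff chan_lang_def stable_def)

lemma consistent_family_single_channel_chan_lang:
  "consistent_family src dst M K T \<beta> (\<lambda>S. single_channel \<beta> (chan_lang src dst M T h S))"
  unfolding consistent_family_def
proof (intro ballI allI impI)
  fix S S2 C C'
  assume reach: "cfsm_reach src dst M T (S, C) (S2, C')"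
    and off_\<beta>: "\<forall>\<xi>. \<xi> \<noteq> \<beta> \<longrightarrow> C \<xi> = [] \<and> C' \<xi> = []"
    and "C \<beta> \<in> single_channel \<beta> (chan_lang src dst M T h S)"
  then obtain D where "D \<in> chan_lang src dst M T h S" "\<forall>\<xi>. \<xi> \<noteq> \<beta> \<longrightarrow> D \<xi> = []" "D \<beta> = C \<beta>"
    unfolding in_single_channel_iff by blast
  moreover have "D = C"
  proof
    fix \<xi>
    show "D \<xi> = C \<xi>"
      using \<open>\<forall>\<xi>. \<xi> \<noteq> \<beta> \<longrightarrow> D \<xi> = []\<close> \<open>D \<beta> = C \<beta>\<close> off_\<beta> by (cases "\<xi> = \<beta>") auto
  qed
  ultimately have "C \<in> chan_lang src dst M T h S"
    by simp
  with reach have "C' \<in> chan_lang src dst M T h S2"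
    unfolding chan_lang_def by auto
  with off_\<beta> show "C' \<beta> \<in> single_channel \<beta> (chan_lang src dst M T h S2)"
    unfolding in_single_channel_iff by blast
qed

lemma consistent_family_Nil_if_stable:
  assumes "consistent_family src dst M K T \<beta> Q"
    and "h \<in> composite_states K" "S \<in> composite_states K"
    and "[] \<in> Q h" "stable src dst M T h S"
  shows "[] \<in> Q S"
proof -
  have "cfsm_reach src dst M T (h, empty_channels) (S, empty_channels)"
    using assms(5) unfolding stable_def .
  moreover have "\<forall>\<xi>. \<xi> \<noteq> \<beta> \<longrightarrow> empty_channels \<xi> = [] \<and> empty_channels \<xi> = []"
    by (simp add: empty_channels_def)
  moreover have "empty_channels \<beta> \<in> Q h"
    using assms(4) by (simp add: empty_channels_def)
  ultimately have "empty_channels \<beta> \<in> Q S"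
    using assms(1-3) unfolding consistent_family_def by blast
  then show ?thesis
    by (simp add: empty_channels_def)
qed

lemma cfsm_protocol_initial_composite_state:
  "cfsm_protocol src dst M K h T \<Longrightarrow> h \<in> composite_states K"
  unfolding cfsm_protocol_def composite_states_def by auto

theorem theorem8p6:
  fixes src dst :: "'e::finite \<Rightarrow> 'n::finite"
    and M :: "'e \<Rightarrow> 'm set"
    and K :: "'n \<Rightarrow> 's set" and h :: "'n \<Rightarrow> 's"
    and T :: "'n \<Rightarrow> ('s \<times> 'm act \<times> 's) set"
    and \<beta> :: 'e and S' :: "'n \<Rightarrow> 's"
  assumes "cfsm_protocol src dst M K h T"
    and "cyclic_graph src dst"
    and "rational_channel_property src dst M K T h"
    and "S' \<in> composite_states K"
  shows "\<not> stable src dst M T h S' \<longleftrightarrow>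
    (\<exists>Q :: ('n \<Rightarrow> 's) \<Rightarrow> 'm list set.
       (\<forall>S \<in> composite_states K. regular_lang (Q S) \<and> Q S \<subseteq> lists (M \<beta>)) \<and>
       consistent_family src dst M K T \<beta> Q \<and>
       [] \<in> Q h \<and> [] \<notin> Q S')"
proof
  assume "\<not> stable src dst M T h S'"
  define Q where "Q S = single_channel \<beta> (chan_lang src dst M T h S)" for S
  have "regular_lang (Q S) \<and> Q S \<subseteq> lists (M \<beta>)" if "S \<in> composite_states K" for S
  proof -
    from assms(3) that have "rational_rel M (chan_lang src dst M T h S)"
      unfolding rational_channel_property_def by blast
    then show ?thesis
      by (simp add: Q_def regular_single_channel rational_rel_subset_chan_space
                    single_channel_subset_lists)
  qed
  moreover have "consistent_family src dst M K T \<beta> Q"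
    unfolding Q_def by (rule consistent_family_single_channel_chan_lang)
  moreover have "[] \<in> Q h" "[] \<notin> Q S'"
    using \<open>\<not> stable src dst M T h S'\<close>
    by (simp_all add: Q_def Nil_in_single_channel_chan_lang_iff_stable stable_def)
  ultimately show "\<exists>Q. (\<forall>S \<in> composite_states K. regular_lang (Q S) \<and> Q S \<subseteq> lists (M \<beta>)) \<and>
      consistent_family src dst M K T \<beta> Q \<and> [] \<in> Q h \<and> [] \<notin> Q S'"
    by (intro exI[of _ Q]) blast
next
  assume "\<exists>Q. (\<forall>S \<in> composite_states K. regular_lang (Q S) \<and> Q S \<subseteq> lists (M \<beta>)) \<and>
      consistent_family src dst M K T \<beta> Q \<and> [] \<in> Q h \<and> [] \<notin> Q S'"
  then obtain Q where "consistent_family src dst M K T \<beta> Q" "[] \<in> Q h" "[] \<notin> Q S'"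
    by blast
  then show "\<not> stable src dst M T h S'"
    using consistent_family_Nil_if_stable cfsm_protocol_initial_composite_state[OF assms(1)] assms(4)
    by metis
qed

end
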